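(* Let $L\in\mathcal{N}$ and assume that $L$ is isomorphic to a sublattice of a free lattice. Let $Y$ be an antichain in $L$. If there is an element $d\in L$ such that $a\wedge b=d$ for all distinct $a,b\in Y$, then $|Y|\le 3$ and at most two elements of $Y$ do not cover $d$ in $L$. Moreover, if there is an element $d\in L$ such that $a\vee b=d$ for all distinct $a,b\in Y$, then $|Y|\le 3$ and at most two elements of $Y$ are not covered by $d$ in $L$.
   Context: $\mathcal{N}$ denotes the variety of lattices generated by the pentagon $N_5$ (the five-element non-modular lattice $0<x<y<1$, $0<z<1$, with $z$ incomparable to $x,y$). For $a<b$ in a poset $P$, $b$ covers $a$ if there is no $c\in P$ with $a<c<b$. *)

theory Defs
  imports Main
begin

datatype 'v lterm = Var 'v | Join "'v lterm" "'v lterm" | Meet "'v lterm" "'v lterm"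

fun eval_lt :: "('b \<Rightarrow> 'b \<Rightarrow> 'b) \<Rightarrow> ('b \<Rightarrow> 'b \<Rightarrow> 'b) \<Rightarrow> ('v \<Rightarrow> 'b) \<Rightarrow> 'v lterm \<Rightarrow> 'b" where
  "eval_lt j m v (Var x) = v x"
| "eval_lt j m v (Join s t) = j (eval_lt j m v s) (eval_lt j m v t)"
| "eval_lt j m v (Meet s t) = m (eval_lt j m v s) (eval_lt j m v t)"

text \<open>The pentagon N5: 0 < x < y < 1, 0 < z < 1, z incomparable to x, y.\<close>
datatype n5 = N0 | NX | NY | NZ | N1

fun n5_le :: "n5 \<Rightarrow> n5 \<Rightarrow> bool" where
  "n5_le N0 _ = True"
| "n5_le _ N1 = True"
| "n5_le NX NX = True"
| "n5_le NX NY = True"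
| "n5_le NY NY = True"
| "n5_le NZ NZ = True"
| "n5_le _ _ = False"

definition n5_join :: "n5 \<Rightarrow> n5 \<Rightarrow> n5" where
  "n5_join a b = (if n5_le a b then b else if n5_le b a then a else N1)"

definition n5_meet :: "n5 \<Rightarrow> n5 \<Rightarrow> n5" where
  "n5_meet a b = (if n5_le a b then a else if n5_le b a then b else N0)"

text \<open>L (a lattice type) belongs to the variety \<N> generated by N5:
  L satisfies every lattice identity satisfied by N5.\<close>
definition in_variety_N :: "'a::lattice itself \<Rightarrow> bool" where
  "in_variety_N _ \<longleftrightarrow>
     (\<forall>s t :: nat lterm.
        (\<forall>v :: nat \<Rightarrow> n5. eval_lt n5_join n5_meet v s = eval_lt n5_join n5_meet v t) \<longrightarrow>
        (\<forall>v :: nat \<Rightarrow> 'a. eval_lt sup inf v s = eval_lt sup inf v t))"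

text \<open>The order of the free lattice FL(V): the least quasi-order on lattice terms
  derivable from the lattice laws; the free lattice is the quotient by the
  induced equivalence.\<close>
inductive fl_le :: "'v lterm \<Rightarrow> 'v lterm \<Rightarrow> bool" where
  refl: "fl_le s s"
| trans: "fl_le s t \<Longrightarrow> fl_le t u \<Longrightarrow> fl_le s u"
| join_upper1: "fl_le s (Join s t)"
| join_upper2: "fl_le t (Join s t)"
| join_least: "fl_le s u \<Longrightarrow> fl_le t u \<Longrightarrow> fl_le (Join s t) u"
| meet_lower1: "fl_le (Meet s t) s"
| meet_lower2: "fl_le (Meet s t) t"
| meet_greatest: "fl_le u s \<Longrightarrow> fl_le u t \<Longrightarrow> fl_le u (Meet s t)"

definition fl_eq :: "'v lterm \<Rightarrow> 'v lterm \<Rightarrow> bool" where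
  "fl_eq s t \<longleftrightarrow> fl_le s t \<and> fl_le t s"

definition fl_embedding :: "('a::lattice \<Rightarrow> 'v lterm) \<Rightarrow> bool" where
  "fl_embedding f \<longleftrightarrow>
     (\<forall>a b. fl_eq (f (sup a b)) (Join (f a) (f b))) \<and>
     (\<forall>a b. fl_eq (f (inf a b)) (Meet (f a) (f b))) \<and>
     (\<forall>a b. fl_eq (f a) (f b) \<longrightarrow> a = b)"

definition antichain_in :: "'a::order set \<Rightarrow> bool" where
  "antichain_in Y \<longleftrightarrow> (\<forall>a\<in>Y. \<forall>b\<in>Y. a \<le> b \<longrightarrow> a = b)"

text \<open>covers a b: b covers a.\<close>
definition covers :: "'a::order \<Rightarrow> 'a \<Rightarrow> bool" where
  "covers a b \<longleftrightarrow> a < b \<and> \<not> (\<exists>c. a < c \<and> c < b)"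

end

theory Submission
  imports Defs "HOL-Library.Dual_Ordered_Lattice"
begin

text \<open>
  Sublattices of free lattices satisfy Whitman's condition (W): \<open>s \<sqinter> t \<le> u \<squnion> v\<close> implies
  \<open>s \<le> u \<squnion> v\<close>, \<open>t \<le> u \<squnion> v\<close>, \<open>s \<sqinter> t \<le> u\<close> or \<open>s \<sqinter> t \<le> v\<close>. Let \<open>x, y, z\<close> be an antichain with
  common meet \<open>d\<close>. In \<open>\<N>\<close> the lattice generated by \<open>x, y, z\<close> and elements \<open>d \<le> x\<^sub>1 \<le> x\<close>,
  \<open>d \<le> y\<^sub>1 \<le> y\<close>, \<open>d \<le> z\<^sub>1 \<le> z\<close> satisfies a few inequalities that can be checked in \<open>N\<^sub>5\<close>,
  e.g. \<open>z \<sqinter> (x \<squnion> y) = d\<close> and \<open>(x \<squnion> y) \<sqinter> (x \<squnion> z) = x\<close>. Applying (W) to them shows: a fourth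
  element \<open>e\<close> with the same meets is impossible, because \<open>x \<squnion> y, z, e\<close> would again have common
  meet \<open>d\<close>; and if \<open>x\<^sub>1, y\<^sub>1, z\<^sub>1\<close> are all strictly above \<open>d\<close> and below \<open>x, y, z\<close>, then first
  \<open>x \<le> x\<^sub>1 \<squnion> y\<^sub>1 \<squnion> z\<^sub>1\<close>, then \<open>x \<le> x\<^sub>1 \<squnion> y\<^sub>1\<close> and \<open>x \<le> x\<^sub>1 \<squnion> z\<^sub>1\<close>, whence \<open>x = x\<^sub>1\<close>. Both \<open>\<N>\<close> and
  (W) are self-dual, which gives the statement about joins.
\<close>

section \<open>Whitman's condition\<close>

text \<open>The order of the free lattice without the transitivity rule; inverting its rules yields (W).\<close>

inductive cut_free_le :: "'v lterm \<Rightarrow> 'v lterm \<Rightarrow> bool" where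
  var: "cut_free_le (Var x) (Var x)"
| join_left: "cut_free_le s u \<Longrightarrow> cut_free_le t u \<Longrightarrow> cut_free_le (Join s t) u"
| meet_right: "cut_free_le u s \<Longrightarrow> cut_free_le u t \<Longrightarrow> cut_free_le u (Meet s t)"
| join_right1: "cut_free_le u s \<Longrightarrow> cut_free_le u (Join s t)"
| join_right2: "cut_free_le u t \<Longrightarrow> cut_free_le u (Join s t)"
| meet_left1: "cut_free_le s u \<Longrightarrow> cut_free_le (Meet s t) u"
| meet_left2: "cut_free_le t u \<Longrightarrow> cut_free_le (Meet s t) u"

lemma cut_free_le_refl: "cut_free_le s s"
  by (induction s) (auto intro: cut_free_le.intros)

lemma cut_free_le_JoinD: "cut_free_le (Join s t) u \<Longrightarrow> cut_free_le s u \<and> cut_free_le t u"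
  by (induction "Join s t" u rule: cut_free_le.induct) (auto intro: cut_free_le.intros)

lemma cut_free_le_trans: "cut_free_le s t \<Longrightarrow> cut_free_le t u \<Longrightarrow> cut_free_le s u"
proof (induction s t arbitrary: u rule: cut_free_le.induct)
  case (meet_right v s t)
  from meet_right.prems show ?case
    by (induction "Meet s t" u rule: cut_free_le.induct)
       (auto intro: cut_free_le.intros meet_right.IH)
qed (auto intro: cut_free_le.intros dest: cut_free_le_JoinD)

lemma fl_le_iff_cut_free_le: "fl_le s t \<longleftrightarrow> cut_free_le s t"
proof
  show "fl_le s t \<Longrightarrow> cut_free_le s t"
    by (induction rule: fl_le.induct)
       (auto intro: cut_free_le.intros cut_free_le_refl cut_free_le_trans)
  show "cut_free_le s t \<Longrightarrow> fl_le s t"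
    by (induction rule: cut_free_le.induct) (auto intro: fl_le.intros fl_le.trans)
qed

lemma fl_le_whitman:
  assumes "fl_le (Meet s t) (Join u v)"
  shows "fl_le s (Join u v) \<or> fl_le t (Join u v) \<or> fl_le (Meet s t) u \<or> fl_le (Meet s t) v"
  using assms unfolding fl_le_iff_cut_free_le by (cases rule: cut_free_le.cases) auto

definition whitman_condition :: "'a::lattice itself \<Rightarrow> bool" where
  "whitman_condition _ \<longleftrightarrow> (\<forall>s t u v :: 'a.
     inf s t \<le> sup u v \<longrightarrow> s \<le> sup u v \<or> t \<le> sup u v \<or> inf s t \<le> u \<or> inf s t \<le> v)"

lemma whitman_conditionD:
  fixes s t u v :: "'a::lattice"
  assumes "whitman_condition TYPE('a)" and "inf s t \<le> sup u v"
  shows "s \<le> sup u v \<or> t \<le> sup u v \<or> inf s t \<le> u \<or> inf s t \<le> v"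
  using assms unfolding whitman_condition_def by blast

lemma fl_embedding_le_iff:
  assumes "fl_embedding f"
  shows "a \<le> b \<longleftrightarrow> fl_le (f a) (f b)"
proof
  assume "a \<le> b"
  then have "fl_eq (f a) (Meet (f a) (f b))"
    using assms unfolding fl_embedding_def by (metis inf_absorb1)
  then show "fl_le (f a) (f b)"
    unfolding fl_eq_def by (meson fl_le.meet_lower2 fl_le.trans)
next
  assume "fl_le (f a) (f b)"
  moreover have "fl_eq (f (inf a b)) (Meet (f a) (f b))"
    using assms unfolding fl_embedding_def by blast
  ultimately have "fl_eq (f (inf a b)) (f a)"
    unfolding fl_eq_def by (meson fl_le.meet_greatest fl_le.meet_lower1 fl_le.refl fl_le.trans)
  then show "a \<le> b"
    using assms unfolding fl_embedding_def by (metis inf.orderI)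
qed

lemma fl_embedding_whitman:
  fixes f :: "'a::lattice \<Rightarrow> 'v lterm"
  assumes "fl_embedding f"
  shows "whitman_condition TYPE('a)"
  unfolding whitman_condition_def
proof (intro allI impI)
  fix s t u v :: 'a
  have meet: "fl_eq (f (inf s t)) (Meet (f s) (f t))"
    and join: "fl_eq (f (sup u v)) (Join (f u) (f v))"
    using assms unfolding fl_embedding_def by blast+
  assume "inf s t \<le> sup u v"
  then have "fl_le (Meet (f s) (f t)) (Join (f u) (f v))"
    using meet join fl_embedding_le_iff[OF assms] unfolding fl_eq_def by (meson fl_le.trans)
  then show "s \<le> sup u v \<or> t \<le> sup u v \<or> inf s t \<le> u \<or> inf s t \<le> v"
    using fl_le_whitman meet join fl_embedding_le_iff[OF assms]
    unfolding fl_eq_def by (meson fl_le.trans)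
qed

section \<open>Inequalities relative to a configuration, decided in \<open>N\<^sub>5\<close>\<close>

lemma n5_le_trans: "n5_le x y \<Longrightarrow> n5_le y z \<Longrightarrow> n5_le x z"
  by (cases x; cases y; cases z) simp_all

instantiation n5 :: lattice
begin

definition less_eq_n5 :: "n5 \<Rightarrow> n5 \<Rightarrow> bool" where "less_eq_n5 = n5_le"
definition less_n5 :: "n5 \<Rightarrow> n5 \<Rightarrow> bool" where "less_n5 x y \<longleftrightarrow> n5_le x y \<and> x \<noteq> y"
definition sup_n5 :: "n5 \<Rightarrow> n5 \<Rightarrow> n5" where "sup_n5 = n5_join"
definition inf_n5 :: "n5 \<Rightarrow> n5 \<Rightarrow> n5" where "inf_n5 = n5_meet"

instance
proof
  fix x y z :: n5
  show "x \<le> x" "x \<le> y \<Longrightarrow> y \<le> x \<Longrightarrow> x = y" "x < y \<longleftrightarrow> x \<le> y \<and> \<not> y \<le> x"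
    unfolding less_eq_n5_def less_n5_def by (cases x; cases y; simp)+
  show "x \<le> y \<Longrightarrow> y \<le> z \<Longrightarrow> x \<le> z"
    unfolding less_eq_n5_def by (rule n5_le_trans)
  show "inf x y \<le> x" "inf x y \<le> y" "x \<le> sup x y" "y \<le> sup x y"
    unfolding less_eq_n5_def inf_n5_def sup_n5_def n5_join_def n5_meet_def by (cases x; cases y; simp)+
  show "x \<le> y \<Longrightarrow> x \<le> z \<Longrightarrow> x \<le> inf y z" "y \<le> x \<Longrightarrow> z \<le> x \<Longrightarrow> sup y z \<le> x"
    unfolding less_eq_n5_def inf_n5_def sup_n5_def n5_join_def n5_meet_def
    by (cases x; cases y; cases z; simp)+
qed

end

lemma n5_sup_simps [simp]:
  "sup N0 x = x" "sup x N0 = x" "sup N1 x = N1" "sup x N1 = N1" "sup x x = x"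
  "sup NX NY = NY" "sup NY NX = NY" "sup NX NZ = N1" "sup NZ NX = N1" "sup NY NZ = N1" "sup NZ NY = N1"
  by (cases x; simp add: sup_n5_def n5_join_def)+

lemma n5_inf_simps [simp]:
  "inf N0 x = N0" "inf x N0 = N0" "inf N1 x = x" "inf x N1 = x" "inf x x = x"
  "inf NX NY = NX" "inf NY NX = NX" "inf NX NZ = N0" "inf NZ NX = N0" "inf NY NZ = N0" "inf NZ NY = N0"
  by (cases x; simp add: inf_n5_def n5_meet_def)+

lemma n5_le_simps [simp]:
  "N0 \<le> x" "x \<le> N1" "NX \<le> NY" "N1 \<le> x \<longleftrightarrow> x = N1" "x \<le> N0 \<longleftrightarrow> x = N0"
  "\<not> NY \<le> NX" "\<not> NX \<le> NZ" "\<not> NZ \<le> NX" "\<not> NY \<le> NZ" "\<not> NZ \<le> NY"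
  by (cases x; simp add: less_eq_n5_def)+

lemma in_variety_N_eq:
  fixes w :: "nat \<Rightarrow> 'a::lattice"
  assumes "in_variety_N TYPE('a)" and "\<And>v :: nat \<Rightarrow> n5. eval_lt sup inf v s = eval_lt sup inf v t"
  shows "eval_lt sup inf w s = eval_lt sup inf w t"
  using assms unfolding in_variety_N_def sup_n5_def inf_n5_def by blast

definition triple_config :: "'a::lattice \<Rightarrow> 'a \<Rightarrow> 'a \<Rightarrow> 'a \<Rightarrow> 'a \<Rightarrow> 'a \<Rightarrow> bool" where
  "triple_config x y z x1 y1 z1 \<longleftrightarrow> inf x y = inf x z \<and> inf x y = inf y z \<and>
     inf x y \<le> x1 \<and> x1 \<le> x \<and> inf x y \<le> y1 \<and> y1 \<le> y \<and> inf x y \<le> z1 \<and> z1 \<le> z"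

definition val6 :: "'a \<Rightarrow> 'a \<Rightarrow> 'a \<Rightarrow> 'a \<Rightarrow> 'a \<Rightarrow> 'a \<Rightarrow> nat \<Rightarrow> 'a" where
  "val6 x y z x1 y1 z1 i = (if i = 1 then y else if i = 2 then z else if i = 3 then x1
     else if i = 4 then y1 else if i = 5 then z1 else x)"

definition configs :: "'a::lattice list \<Rightarrow> ('a \<times> 'a \<times> 'a \<times> 'a \<times> 'a \<times> 'a) list" where
  "configs es = [(x, y, z, x1, y1, z1). x \<leftarrow> es, y \<leftarrow> es, z \<leftarrow> es, inf x y = inf x z \<and> inf x y = inf y z,
     x1 \<leftarrow> es, inf x y \<le> x1 \<and> x1 \<le> x, y1 \<leftarrow> es, inf x y \<le> y1 \<and> y1 \<le> y,
     z1 \<leftarrow> es, inf x y \<le> z1 \<and> z1 \<le> z]"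

lemma mem_configs_iff:
  assumes "set es = UNIV"
  shows "(x, y, z, x1, y1, z1) \<in> set (configs es) \<longleftrightarrow> triple_config x y z x1 y1 z1"
  using assms unfolding configs_def triple_config_def by auto

definition n5_config_le :: "nat lterm \<Rightarrow> nat lterm \<Rightarrow> bool" where
  "n5_config_le s t \<longleftrightarrow> list_all (\<lambda>(x, y, z, x1, y1, z1).
     eval_lt sup inf (val6 x y z x1 y1 z1) s \<le> eval_lt sup inf (val6 x y z x1 y1 z1) t)
     (configs [N0, NX, NY, NZ, N1])"

lemma n5_config_leD:
  fixes x y z x1 y1 z1 :: n5
  assumes "n5_config_le s t" and "triple_config x y z x1 y1 z1"
  shows "eval_lt sup inf (val6 x y z x1 y1 z1) s \<le> eval_lt sup inf (val6 x y z x1 y1 z1) t"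
proof -
  have "set [N0, NX, NY, NZ, N1] = UNIV" using n5.exhaust by auto
  with assms(2) have "(x, y, z, x1, y1, z1) \<in> set (configs [N0, NX, NY, NZ, N1])"
    using mem_configs_iff by blast
  with assms(1) show ?thesis unfolding n5_config_le_def list_all_iff by fastforce
qed

fun subst :: "(nat \<Rightarrow> nat lterm) \<Rightarrow> nat lterm \<Rightarrow> nat lterm" where
  "subst \<sigma> (Var i) = \<sigma> i"
| "subst \<sigma> (Join s t) = Join (subst \<sigma> s) (subst \<sigma> t)"
| "subst \<sigma> (Meet s t) = Meet (subst \<sigma> s) (subst \<sigma> t)"

lemma eval_subst: "eval_lt j m v (subst \<sigma> s) = eval_lt j m (\<lambda>i. eval_lt j m v (\<sigma> i)) s"
  by (induction s) auto

definition balance :: "('b \<Rightarrow> 'b \<Rightarrow> 'b) \<Rightarrow> ('b \<Rightarrow> 'b \<Rightarrow> 'b) \<Rightarrow> 'b \<times> 'b \<times> 'b \<Rightarrow> 'b \<times> 'b \<times> 'b" where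
  "balance j m = (\<lambda>(x, y, z). (j x (m y z), j y (m x z), j z (m x y)))"

text \<open>
  Interpreted in a lattice, \<open>config_retraction\<close> maps every valuation of the variables \<open>0..5\<close> to
  a configuration and fixes configurations. In \<open>N\<^sub>5\<close> two rounds of \<open>balance\<close> are needed to make
  the pairwise meets equal; one round is not enough. Hence an inequality holding on all
  configurations of \<open>N\<^sub>5\<close> becomes, after substitution, an identity of \<open>N\<^sub>5\<close>, which transfers to
  every lattice in \<open>\<N>\<close>.
\<close>

definition config_retraction :: "('b \<Rightarrow> 'b \<Rightarrow> 'b) \<Rightarrow> ('b \<Rightarrow> 'b \<Rightarrow> 'b) \<Rightarrow> (nat \<Rightarrow> 'b) \<Rightarrow> nat \<Rightarrow> 'b" where
  "config_retraction j m v = (case balance j m (balance j m (v 0, v 1, v 2)) of (x, y, z) \<Rightarrow>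
     val6 x y z (m (j (v 3) (m x y)) x) (m (j (v 4) (m x y)) y) (m (j (v 5) (m x y)) z))"

lemma eval_config_retraction:
  "eval_lt j m w (config_retraction Join Meet Var i) = config_retraction j m w i"
  by (simp add: config_retraction_def balance_def val6_def)

lemma n5_balance_twice:
  fixes x y z :: n5
  shows "case balance sup inf (balance sup inf (x, y, z)) of (x', y', z') \<Rightarrow>
    inf x' y' = inf x' z' \<and> inf x' y' = inf y' z'"
  unfolding balance_def by (cases x; cases y; cases z) simp_all

lemma balance_fixed:
  fixes x y z :: "'a::lattice"
  assumes "inf x y = inf x z" and "inf x y = inf y z"
  shows "balance sup inf (x, y, z) = (x, y, z)"
  using assms unfolding balance_def by (metis inf_le1 inf_le2 sup.absorb1 prod.case)

lemma n5_config_retraction: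
  fixes v :: "nat \<Rightarrow> n5"
  defines "r \<equiv> config_retraction sup inf v"
  shows "triple_config (r 0) (r 1) (r 2) (r 3) (r 4) (r 5)"
  using n5_balance_twice[of "v 0" "v 1" "v 2"]
  unfolding r_def config_retraction_def triple_config_def
  by (auto simp: val6_def split: prod.splits intro: le_infI1 le_supI2)

lemma config_retraction_fixed:
  fixes x y z x1 y1 z1 :: "'a::lattice"
  assumes "triple_config x y z x1 y1 z1"
  shows "config_retraction sup inf (val6 x y z x1 y1 z1) = val6 x y z x1 y1 z1"
  using assms unfolding triple_config_def config_retraction_def
  by (auto simp: balance_fixed val6_def inf_absorb1 sup_absorb1 fun_eq_iff)

lemma config_retraction_val6:
  "config_retraction j m v = val6 (config_retraction j m v 0) (config_retraction j m v 1)
     (config_retraction j m v 2) (config_retraction j m v 3) (config_retraction j m v 4) (config_retraction j m v 5)"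
  by (simp add: config_retraction_def val6_def fun_eq_iff split: prod.split)

lemma config_le_transfer:
  fixes x y z x1 y1 z1 :: "'a::lattice"
  assumes "in_variety_N TYPE('a)" and "triple_config x y z x1 y1 z1" and "n5_config_le s t"
  shows "eval_lt sup inf (val6 x y z x1 y1 z1) s \<le> eval_lt sup inf (val6 x y z x1 y1 z1) t"
proof -
  define \<sigma> where "\<sigma> = config_retraction Join Meet Var"
  have eval_\<sigma>: "eval_lt sup inf w (subst \<sigma> u) = eval_lt sup inf (config_retraction sup inf w) u"
    for w :: "nat \<Rightarrow> 'b::lattice" and u
    by (simp add: \<sigma>_def eval_subst eval_config_retraction)
  have "eval_lt sup inf v (Meet (subst \<sigma> s) (subst \<sigma> t)) = eval_lt sup inf v (subst \<sigma> s)"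
    for v :: "nat \<Rightarrow> n5"
  proof -
    have "eval_lt sup inf (config_retraction sup inf v) s \<le> eval_lt sup inf (config_retraction sup inf v) t"
      using n5_config_leD[OF assms(3) n5_config_retraction] by (metis config_retraction_val6)
    then show ?thesis by (simp add: eval_\<sigma> inf_absorb1)
  qed
  then have "eval_lt sup inf (val6 x y z x1 y1 z1) (Meet (subst \<sigma> s) (subst \<sigma> t))
      = eval_lt sup inf (val6 x y z x1 y1 z1) (subst \<sigma> s)"
    by (rule in_variety_N_eq[OF assms(1)])
  then show ?thesis
    by (simp add: eval_\<sigma> config_retraction_fixed[OF assms(2)] inf.absorb_iff1)
qed

lemma triple_config_swap12: "triple_config x y z x1 y1 z1 \<Longrightarrow> triple_config y x z y1 x1 z1"
  unfolding triple_config_def by (metis inf_commute)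

lemma triple_config_swap23: "triple_config x y z x1 y1 z1 \<Longrightarrow> triple_config x z y x1 z1 y1"
  unfolding triple_config_def by (metis inf_commute)

section \<open>Configurations in a lattice of \<open>\<N>\<close> with Whitman's condition\<close>

locale N_triple =
  fixes x y z x1 y1 z1 :: "'a::lattice"
  assumes in_N: "in_variety_N TYPE('a)" and config: "triple_config x y z x1 y1 z1"
begin

lemma config_le: "n5_config_le s t \<Longrightarrow>
    eval_lt sup inf (val6 x y z x1 y1 z1) s \<le> eval_lt sup inf (val6 x y z x1 y1 z1) t"
  by (rule config_le_transfer[OF in_N config])

text \<open>The next five inequalities are verified by evaluation on the 128 configurations of \<open>N\<^sub>5\<close>.\<close>

lemma inf_sup_other_le: "inf z (sup x y) \<le> inf x y"
  using config_le[of "Meet (Var 2) (Join (Var 0) (Var 1))" "Meet (Var 0) (Var 1)"]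
  by (simp add: n5_config_le_def configs_def val6_def)

lemma inf_sup_sup_eq: "inf (sup x y) (sup x z) = x"
  using config_le[of "Meet (Join (Var 0) (Var 1)) (Join (Var 0) (Var 2))" "Var 0"]
  by (simp add: n5_config_le_def configs_def val6_def antisym)

lemma inf_sup_lowers_le:
  "inf (sup x y) (sup x1 (sup y1 z1)) \<le> sup (inf (sup x y) (sup x1 z1)) (inf (sup x y) (sup y1 z1))"
  using config_le[of "Meet (Join (Var 0) (Var 1)) (Join (Var 3) (Join (Var 4) (Var 5)))"
      "Join (Meet (Join (Var 0) (Var 1)) (Join (Var 3) (Var 5))) (Meet (Join (Var 0) (Var 1)) (Join (Var 4) (Var 5)))"]
  by (simp add: n5_config_le_def configs_def val6_def)

lemma cross_le:
  defines "p \<equiv> sup x1 (sup y1 z1)"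
  shows "inf (sup (inf x p) y1) (sup (inf y p) x1) \<le> sup x1 y1"
  using config_le[of "Meet (Join (Meet (Var 0) (Join (Var 3) (Join (Var 4) (Var 5)))) (Var 4))
      (Join (Meet (Var 1) (Join (Var 3) (Join (Var 4) (Var 5)))) (Var 3))" "Join (Var 3) (Var 4)"]
  unfolding p_def by (simp add: n5_config_le_def configs_def val6_def)

lemma inf_sup_lower_pairs_le: "inf x (inf (sup x1 y1) (sup x1 z1)) \<le> x1"
  using config_le[of "Meet (Var 0) (Meet (Join (Var 3) (Var 4)) (Join (Var 3) (Var 5)))" "Var 3"]
  by (simp add: n5_config_le_def configs_def val6_def)

lemma meets: "inf x z = inf x y" "inf y z = inf x y"
  using config unfolding triple_config_def by metis+

lemma lowers_le: "x1 \<le> x" "y1 \<le> y" "z1 \<le> z"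
  using config unfolding triple_config_def by simp_all

lemma inf_sup_others_le: "inf y (sup x z) \<le> inf x y" "inf x (sup y z) \<le> inf x y"
proof -
  interpret xzy: N_triple x z y x1 z1 y1
    using in_N triple_config_swap23[OF config] by unfold_locales
  interpret yzx: N_triple y z x y1 z1 x1
    using in_N triple_config_swap23[OF triple_config_swap12[OF config]] by unfold_locales
  show "inf y (sup x z) \<le> inf x y" "inf x (sup y z) \<le> inf x y"
    using xzy.inf_sup_other_le yzx.inf_sup_other_le meets by simp_all
qed

end

locale whitman_N_triple = N_triple x y z x1 y1 z1 for x y z x1 y1 z1 :: "'a::lattice" +
  assumes whitman: "whitman_condition TYPE('a)"
    and incomparable: "\<not> x \<le> y" "\<not> y \<le> x" "\<not> x \<le> z" "\<not> z \<le> x" "\<not> y \<le> z" "\<not> z \<le> y"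
    and lowers_above_meet: "\<not> x1 \<le> inf x y" "\<not> y1 \<le> inf x y" "\<not> z1 \<le> inf x y"
begin

lemma swap12: "whitman_N_triple y x z y1 x1 z1"
  using in_N triple_config_swap12[OF config] whitman incomparable lowers_above_meet
  by unfold_locales (simp_all add: inf_commute)

lemma swap23: "whitman_N_triple x z y x1 z1 y1"
  using in_N triple_config_swap23[OF config] whitman incomparable lowers_above_meet
  by unfold_locales (simp_all add: meets)

lemma le_sup_lowers: "x \<le> sup x1 (sup y1 z1)"
proof -
  let ?p = "sup x1 (sup y1 z1)"
  let ?A = "inf (sup x y) (sup x1 z1)" and ?B = "inf (sup x y) (sup y1 z1)"
  consider "sup x y \<le> sup ?A ?B" | "?p \<le> sup ?A ?B" | "inf (sup x y) ?p \<le> ?A" | "inf (sup x y) ?p \<le> ?B"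
    using whitman_conditionD[OF whitman inf_sup_lowers_le] by blast
  then show ?thesis
  proof cases
    case 1
    moreover have "sup ?A ?B \<le> ?p" by (simp add: le_infI2 le_supI2)
    ultimately show ?thesis by (meson le_sup_iff order_trans)
  next
    case 2
    also have "sup ?A ?B \<le> sup x y" by (simp add: le_infI1)
    finally have "z1 \<le> sup x y" by simp
    then have "z1 \<le> inf z (sup x y)" using lowers_le by simp
    then show ?thesis using inf_sup_other_le lowers_above_meet order_trans by blast
  next
    case 3
    have "y1 \<le> inf (sup x y) ?p" using lowers_le by (simp add: le_supI2)
    also note 3
    also have "?A \<le> sup x z" using lowers_le by (intro le_infI2 sup_mono) auto
    finally have "y1 \<le> inf y (sup x z)" using lowers_le by simp
    then show ?thesis using inf_sup_others_le lowers_above_meet order_trans by blast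
  next
    case 4
    have "x1 \<le> inf (sup x y) ?p" using lowers_le by (simp add: le_supI1)
    also note 4
    also have "?B \<le> sup y z" using lowers_le by (intro le_infI2 sup_mono) auto
    finally have "x1 \<le> inf x (sup y z)" using lowers_le by simp
    then show ?thesis using inf_sup_others_le lowers_above_meet order_trans by blast
  qed
qed

lemma le_sup_lowers_pair: "x \<le> sup x1 y1 \<or> y \<le> sup x1 y1"
proof -
  interpret yxz: whitman_N_triple y x z y1 x1 z1 by (rule swap12)
  have "inf x (sup x1 (sup y1 z1)) = x" "inf y (sup x1 (sup y1 z1)) = y"
    using le_sup_lowers yxz.le_sup_lowers by (simp_all add: inf_absorb1 sup.left_commute)
  then have "inf (sup x y1) (sup y x1) \<le> sup x1 y1"
    using cross_le by simp
  then consider "sup x y1 \<le> sup x1 y1" | "sup y x1 \<le> sup x1 y1"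
    | "inf (sup x y1) (sup y x1) \<le> x1" | "inf (sup x y1) (sup y x1) \<le> y1"
    using whitman_conditionD[OF whitman] by blast
  then show ?thesis
  proof cases
    case 3
    have "y1 \<le> inf (sup x y1) (sup y x1)" using lowers_le by (simp add: le_supI1)
    also note 3
    finally have "y1 \<le> inf x y" using lowers_le by simp
    with lowers_above_meet show ?thesis by blast
  next
    case 4
    have "x1 \<le> inf (sup x y1) (sup y x1)" using lowers_le by (simp add: le_supI1)
    also note 4
    finally have "x1 \<le> inf x y" using lowers_le by simp
    with lowers_above_meet show ?thesis by blast
  qed simp_all
qed

lemma le_sup_lowers_pairD:
  assumes "\<not> x \<le> x1" and "x \<le> sup x1 y1"
  shows "y \<le> sup x1 y1"
proof -
  have "inf (sup x y) (sup x z) \<le> sup x1 y1"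
    using assms(2) by (simp add: inf_sup_sup_eq)
  then consider "sup x y \<le> sup x1 y1" | "sup x z \<le> sup x1 y1"
    | "inf (sup x y) (sup x z) \<le> x1" | "inf (sup x y) (sup x z) \<le> y1"
    using whitman_conditionD[OF whitman] by blast
  then show ?thesis
  proof cases
    case 2
    also have "sup x1 y1 \<le> sup x y" by (intro sup_mono lowers_le)
    finally have "z \<le> inf z (sup x y)" by simp
    also note inf_sup_other_le
    finally have "z \<le> x" by simp
    with incomparable show ?thesis by blast
  next
    case 3
    with assms(1) show ?thesis by (simp add: inf_sup_sup_eq)
  next
    case 4
    then have "x \<le> y" using lowers_le by (simp add: inf_sup_sup_eq)
    with incomparable show ?thesis by blast
  qed simp
qed

lemma le_sup_lowers_pair_strict:
  assumes "\<not> x \<le> x1" and "\<not> y \<le> y1"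
  shows "x \<le> sup x1 y1"
proof -
  interpret yxz: whitman_N_triple y x z y1 x1 z1 by (rule swap12)
  show ?thesis
    using le_sup_lowers_pair yxz.le_sup_lowers_pairD[OF assms(2)] by (auto simp: sup_commute)
qed

theorem not_all_lowers_strict: "x \<le> x1 \<or> y \<le> y1 \<or> z \<le> z1"
proof (rule ccontr)
  interpret xzy: whitman_N_triple x z y x1 z1 y1 by (rule swap23)
  assume strict: "\<not> ?thesis"
  then have "x \<le> inf x (inf (sup x1 y1) (sup x1 z1))"
    using le_sup_lowers_pair_strict xzy.le_sup_lowers_pair_strict by simp
  then show False
    using inf_sup_lower_pairs_le strict order_trans by blast
qed

end

section \<open>Antichains with a common meet or join\<close>

lemma N_triple_of_meets:
  fixes x y z :: "'a::lattice"
  assumes "in_variety_N TYPE('a)" and "inf x y = inf x z" and "inf x y = inf y z"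
  shows "N_triple x y z (inf x y) (inf x y) (inf x y)"
  using assms by (simp add: N_triple_def triple_config_def) (metis inf_le2)

lemma obtain_four_distinct:
  assumes "\<not> (finite Y \<and> card Y \<le> 3)"
  obtains a b c e where "{a, b, c, e} \<subseteq> Y" and "distinct [a, b, c, e]"
proof -
  obtain T where "T \<subseteq> Y" and "card T = 4"
  proof (cases "finite Y")
    case True
    with assms show ?thesis using obtain_subset_with_card_n[of 4 Y] that by auto
  next
    case False
    then show ?thesis using infinite_arbitrarily_large that by blast
  qed
  moreover from \<open>card T = 4\<close> obtain a where "a \<in> T" by fastforce
  ultimately have "card (T - {a}) = 3" by (simp add: card_Diff_singleton)
  then obtain b c e where "T - {a} = {b, c, e}" and "distinct [b, c, e]"
    by (auto simp: card_3_iff)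
  with \<open>a \<in> T\<close> \<open>T \<subseteq> Y\<close> show ?thesis
    using that[of a b c e] by auto
qed

lemma obtain_three_distinct:
  assumes "\<not> card S \<le> 2" and "finite S"
  obtains a b c where "{a, b, c} \<subseteq> S" and "distinct [a, b, c]"
proof -
  obtain T where "T \<subseteq> S" and "card T = 3"
    using assms obtain_subset_with_card_n[of 3 S] by auto
  then show ?thesis using that by (auto simp: card_3_iff)
qed

lemma common_meet_antichain_card_le_3:
  fixes Y :: "'a::lattice set"
  assumes in_N: "in_variety_N TYPE('a)" and whitman: "whitman_condition TYPE('a)"
    and antichain: "antichain_in Y" and meet: "\<forall>a\<in>Y. \<forall>b\<in>Y. a \<noteq> b \<longrightarrow> inf a b = d"
  shows "finite Y \<and> card Y \<le> 3"
proof (rule ccontr)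
  assume "\<not> ?thesis"
  then obtain a b c e where Y: "{a, b, c, e} \<subseteq> Y" and distinct: "distinct [a, b, c, e]"
    by (rule obtain_four_distinct)
  have meets: "inf a b = d" "inf a c = d" "inf a e = d" "inf b c = d" "inf b e = d" "inf c e = d"
    using meet Y distinct by auto
  have incomparable: "\<not> x \<le> y" if "x \<in> {a, b, c, e}" "y \<in> {a, b, c, e}" "x \<noteq> y" for x y
    using antichain that Y unfolding antichain_in_def by blast
  interpret abc: N_triple a b c d d d using N_triple_of_meets[OF in_N, of a b c] meets by simp
  interpret abe: N_triple a b e d d d using N_triple_of_meets[OF in_N, of a b e] meets by simp
  let ?s = "sup a b"
  have "d \<le> a" "d \<le> c" "d \<le> e"
    using meets by (metis inf_le1 inf_le2)+
  then have "inf ?s c = d" "inf ?s e = d"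
    using abc.inf_sup_other_le abe.inf_sup_other_le meets
    by (auto simp: inf_commute intro!: antisym le_supI1)
  then interpret sce: N_triple ?s c e d d d
    using N_triple_of_meets[OF in_N, of ?s c e] meets by simp
  consider "sup ?s c \<le> ?s" | "sup ?s e \<le> ?s" | "inf (sup ?s c) (sup ?s e) \<le> a" | "inf (sup ?s c) (sup ?s e) \<le> b"
    using whitman_conditionD[OF whitman, of "sup ?s c" "sup ?s e" a b] sce.inf_sup_sup_eq by auto
  then show False
  proof cases
    case 1
    then have "c \<le> a" using \<open>inf ?s c = d\<close> meets by (metis inf.absorb2 inf_le1 le_sup_iff)
    then show False using incomparable[of c a] distinct by auto
  next
    case 2
    then have "e \<le> a" using \<open>inf ?s e = d\<close> meets by (metis inf.absorb2 inf_le1 le_sup_iff)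
    then show False using incomparable[of e a] distinct by auto
  next
    case 3
    then show False using sce.inf_sup_sup_eq incomparable[of b a] distinct by auto
  next
    case 4
    then show False using sce.inf_sup_sup_eq incomparable[of a b] distinct by auto
  qed
qed

lemma meet_of_distinct_less:
  fixes Y :: "'a::lattice set"
  assumes "antichain_in Y" and "a \<in> Y" "b \<in> Y" "a \<noteq> b"
  shows "inf a b < a"
proof -
  have "\<not> a \<le> b" using assms unfolding antichain_in_def by blast
  then show ?thesis by (simp add: less_le_not_le)
qed

lemma common_meet_antichain_noncovers_le_2:
  fixes Y :: "'a::lattice set"
  assumes in_N: "in_variety_N TYPE('a)" and whitman: "whitman_condition TYPE('a)"
    and antichain: "antichain_in Y" and meet: "\<forall>a\<in>Y. \<forall>b\<in>Y. a \<noteq> b \<longrightarrow> inf a b = d"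
  shows "card {a\<in>Y. \<not> covers d a} \<le> 2"
proof (rule ccontr)
  assume "\<not> ?thesis"
  moreover have "finite {a\<in>Y. \<not> covers d a}"
    using common_meet_antichain_card_le_3[OF assms] by simp
  ultimately obtain a b c where abc: "{a, b, c} \<subseteq> {a\<in>Y. \<not> covers d a}" and distinct: "distinct [a, b, c]"
    by (rule obtain_three_distinct)
  have Y: "a \<in> Y" "b \<in> Y" "c \<in> Y" and not_covers: "\<not> covers d a" "\<not> covers d b" "\<not> covers d c"
    using abc by auto
  have meets: "inf a b = d" "inf a c = d" "inf b c = d"
    using meet Y distinct by auto
  have "d < a" using meet_of_distinct_less[OF antichain Y(1,2)] distinct meets by simp
  then obtain a1 where a1: "d < a1" "a1 < a" using not_covers(1) unfolding covers_def by blast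
  have "d < b" using meet_of_distinct_less[OF antichain Y(2,1)] distinct meets by (auto simp: inf_commute)
  then obtain b1 where b1: "d < b1" "b1 < b" using not_covers(2) unfolding covers_def by blast
  have "d < c" using meet_of_distinct_less[OF antichain Y(3,1)] distinct meets by (auto simp: inf_commute)
  then obtain c1 where c1: "d < c1" "c1 < c" using not_covers(3) unfolding covers_def by blast
  have "\<not> a \<le> b" "\<not> b \<le> a" "\<not> a \<le> c" "\<not> c \<le> a" "\<not> b \<le> c" "\<not> c \<le> b"
    using antichain Y distinct unfolding antichain_in_def by auto
  moreover have "triple_config a b c a1 b1 c1"
    using meets a1 b1 c1 unfolding triple_config_def by (simp add: less_imp_le)
  ultimately interpret whitman_N_triple a b c a1 b1 c1
    using in_N whitman meets a1(1) b1(1) c1(1) by unfold_locales simp_all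
  show False
    using not_all_lowers_strict a1(2) b1(2) c1(2) by auto
qed

lemma common_meet_antichain_bounds:
  fixes Y :: "'a::lattice set"
  assumes "in_variety_N TYPE('a)" and "whitman_condition TYPE('a)"
    and "antichain_in Y" and "\<forall>a\<in>Y. \<forall>b\<in>Y. a \<noteq> b \<longrightarrow> inf a b = d"
  shows "finite Y \<and> card Y \<le> 3 \<and> card {a\<in>Y. \<not> covers d a} \<le> 2"
  using common_meet_antichain_card_le_3[OF assms] common_meet_antichain_noncovers_le_2[OF assms] by blast

fun dual_term :: "'v lterm \<Rightarrow> 'v lterm" where
  "dual_term (Var i) = Var i"
| "dual_term (Join s t) = Meet (dual_term s) (dual_term t)"
| "dual_term (Meet s t) = Join (dual_term s) (dual_term t)"

lemma eval_dual_term: "eval_lt sup inf (undual \<circ> w) (dual_term s) = undual (eval_lt sup inf w s)"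
  by (induction s) auto

fun n5_dual :: "n5 \<Rightarrow> n5" where
  "n5_dual N0 = N1" | "n5_dual N1 = N0" | "n5_dual NX = NY" | "n5_dual NY = NX" | "n5_dual NZ = NZ"

lemma n5_dual_sup: "n5_dual (sup x y) = inf (n5_dual x) (n5_dual y)"
  by (cases x; cases y) simp_all

lemma n5_dual_inf: "n5_dual (inf x y) = sup (n5_dual x) (n5_dual y)"
  by (cases x; cases y) simp_all

lemma n5_dual_involution: "n5_dual (n5_dual x) = x"
  by (cases x) simp_all

lemma n5_eval_dual_term: "eval_lt sup inf v (dual_term s) = n5_dual (eval_lt sup inf (n5_dual \<circ> v) s)"
  by (induction s) (simp_all add: n5_dual_sup n5_dual_inf n5_dual_involution)

lemma in_variety_N_dual:
  assumes "in_variety_N TYPE('a::lattice)"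
  shows "in_variety_N TYPE('a dual)"
  unfolding in_variety_N_def
proof (intro allI impI)
  fix s t :: "nat lterm" and w :: "nat \<Rightarrow> 'a dual"
  assume "\<forall>v. eval_lt n5_join n5_meet v s = eval_lt n5_join n5_meet v t"
  then have "eval_lt sup inf v (dual_term s) = eval_lt sup inf v (dual_term t)" for v :: "nat \<Rightarrow> n5"
    unfolding sup_n5_def [symmetric] inf_n5_def [symmetric] by (simp add: n5_eval_dual_term)
  then have "eval_lt sup inf (undual \<circ> w) (dual_term s) = eval_lt sup inf (undual \<circ> w) (dual_term t)"
    by (rule in_variety_N_eq[OF assms])
  then show "eval_lt sup inf w s = eval_lt sup inf w t"
    by (simp add: eval_dual_term dual_eq_iff)
qed

lemma whitman_condition_dual:
  assumes "whitman_condition TYPE('a::lattice)"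
  shows "whitman_condition TYPE('a dual)"
  unfolding whitman_condition_def
proof (intro allI impI)
  fix s t u v :: "'a dual"
  assume "inf s t \<le> sup u v"
  then have "inf (undual u) (undual v) \<le> sup (undual s) (undual t)"
    by (simp add: dual_less_eq_iff)
  from whitman_conditionD[OF assms this]
  show "s \<le> sup u v \<or> t \<le> sup u v \<or> inf s t \<le> u \<or> inf s t \<le> v"
    by (auto simp: dual_less_eq_iff)
qed

lemma covers_dual_iff: "covers (dual x) (dual y) \<longleftrightarrow> covers y (x::'a::order)"
  unfolding covers_def by (metis less_dual_iff dual_undual)

lemma common_join_antichain_bounds:
  fixes Y :: "'a::lattice set"
  assumes in_N: "in_variety_N TYPE('a)" and whitman: "whitman_condition TYPE('a)"
    and antichain: "antichain_in Y" and join: "\<forall>a\<in>Y. \<forall>b\<in>Y. a \<noteq> b \<longrightarrow> sup a b = d"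
  shows "finite Y \<and> card Y \<le> 3 \<and> card {a\<in>Y. \<not> covers a d} \<le> 2"
proof -
  have "antichain_in (dual ` Y)" and "\<forall>a\<in>dual ` Y. \<forall>b\<in>dual ` Y. a \<noteq> b \<longrightarrow> inf a b = dual d"
    using antichain join unfolding antichain_in_def by (auto simp flip: dual_sup_eq)
  from common_meet_antichain_bounds[OF in_variety_N_dual[OF in_N] whitman_condition_dual[OF whitman] this]
  have "finite (dual ` Y) \<and> card (dual ` Y) \<le> 3 \<and> card {x \<in> dual ` Y. \<not> covers (dual d) x} \<le> 2" .
  moreover have "{x \<in> dual ` Y. \<not> covers (dual d) x} = dual ` {a\<in>Y. \<not> covers a d}"
    by (auto simp: covers_dual_iff)
  moreover have "inj_on dual A" for A :: "'a set"
    using inj_dual by (rule inj_on_subset) simp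
  ultimately show ?thesis by (simp add: finite_image_iff card_image)
qed

theorem theorem4p1:
  fixes Y :: "'a::lattice set" and f :: "'a \<Rightarrow> 'v lterm"
  assumes "in_variety_N TYPE('a)"
    and "fl_embedding f"
    and "antichain_in Y"
  shows "(\<forall>d. (\<forall>a\<in>Y. \<forall>b\<in>Y. a \<noteq> b \<longrightarrow> inf a b = d) \<longrightarrow>
            finite Y \<and> card Y \<le> 3 \<and> card {a\<in>Y. \<not> covers d a} \<le> 2)
       \<and> (\<forall>d. (\<forall>a\<in>Y. \<forall>b\<in>Y. a \<noteq> b \<longrightarrow> sup a b = d) \<longrightarrow>
            finite Y \<and> card Y \<le> 3 \<and> card {a\<in>Y. \<not> covers a d} \<le> 2)"
proof -
  have "whitman_condition TYPE('a)"
    using assms(2) by (rule fl_embedding_whitman)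
  then show ?thesis
    using common_meet_antichain_bounds[OF assms(1) _ assms(3)]
      common_join_antichain_bounds[OF assms(1) _ assms(3)] by blast
qed

end
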